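(* Consider one seller with one item and $n$ ex-interim rational buyers $N=\{1,\dots,n\}$; the item's quality $q\in Q=[q_1,q_2]$ has density $g$ and is observed only by the seller; buyer $i$'s valuation is $v_i(q)\ge0$. Let $\pi$ satisfy $\pi(q,s_i)\ge0$ for $i\in\{0,\dots,n\}$ and $\sum_{i\in N}\pi(q,s_i)+\pi(q,s_0)=1$ for all $q$, and let $p$ be such that for all $i\in N$: $\int_Q\pi(q,s_i)[v_i(q)-p]g(q)\,\mathrm{d}q\ge0$ and $\int_Q\pi(q,s_i)[v_i(q)-p]g(q)\,\mathrm{d}q\ge\mathbb{E}_q[v_i(q)]-p$. Then $Rev_{sig}(\pi,p)=p\int_Q\sum_{i\in N}\pi(q,s_i)g(q)\,\mathrm{d}q\le\mathbb{E}_q[v_{max}(q)]$, where $v_{max}(q)=\max_i v_i(q)$.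
   Context: Signal $s_i$ ($i\in N$) recommends buyer $i$ to buy and others not to buy; $s_0$ recommends no one to buy. The constraints express obedience of ex-interim rational buyers, who buy iff their posterior expected valuation is at least $p$. $\mathbb{E}_q$ is expectation under the prior density $g$. *)

theory Defs
  imports "HOL-Analysis.Analysis"
begin

text \<open>Buyers are N = {1..n}; signal index 0 is s_0 (recommend nobody),
  index i in N is s_i. The quality space is Q = {q1..q2}; integrals over Q
  are Lebesgue set integrals w.r.t. lborel.\<close>

definition vmax :: "nat \<Rightarrow> (nat \<Rightarrow> real \<Rightarrow> real) \<Rightarrow> real \<Rightarrow> real" where
  "vmax n v q = Max ((\<lambda>i. v i q) ` {1..n})"

definition expect_q :: "real \<Rightarrow> real \<Rightarrow> (real \<Rightarrow> real) \<Rightarrow> (real \<Rightarrow> real) \<Rightarrow> real" where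
  "expect_q q1 q2 g f = (LINT q:{q1..q2}|lborel. f q * g q)"

definition Rev_sig :: "nat \<Rightarrow> real \<Rightarrow> real \<Rightarrow> (real \<Rightarrow> real) \<Rightarrow> (real \<Rightarrow> nat \<Rightarrow> real) \<Rightarrow> real \<Rightarrow> real" where
  "Rev_sig n q1 q2 g \<pi> p = p * (LINT q:{q1..q2}|lborel. (\<Sum>i\<in>{1..n}. \<pi> q i) * g q)"

end

theory Submission
  imports Defs
begin

text \<open>Obedience to the recommendation \<open>s\<^sub>i\<close> says that buyer \<open>i\<close> pays at most what the
  item is worth to him on the event where \<open>s\<^sub>i\<close> is sent:
  \<open>p \<integral> \<pi>(q,s\<^sub>i) g \<le> \<integral> \<pi>(q,s\<^sub>i) v\<^sub>i g\<close>. Summing over the buyers bounds the revenue by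
  \<open>\<integral> (\<Sum>\<^sub>i \<pi>(q,s\<^sub>i) v\<^sub>i(q)) g\<close>, and since the weights \<open>\<pi>(q,s\<^sub>i)\<close> are nonnegative with sum
  at most 1 the integrand is at most \<open>v\<^sub>m\<^sub>a\<^sub>x(q) g(q)\<close>.\<close>

lemma set_integrable_bounded_factor:
  fixes f h :: "'a \<Rightarrow> real"
  assumes f: "set_integrable M A f" and h: "h \<in> borel_measurable M"
    and bounded: "\<And>x. x \<in> A \<Longrightarrow> \<bar>h x\<bar> \<le> 1"
  shows "set_integrable M A (\<lambda>x. h x * f x)"
proof (rule set_integrable_bound[OF f])
  have "(\<lambda>x. h x * (indicator A x * f x)) \<in> borel_measurable M"
    using h borel_measurable_integrable[OF f[unfolded set_integrable_def]] by simp
  then show "set_borel_measurable M A (\<lambda>x. h x * f x)"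
    unfolding set_borel_measurable_def by (simp add: ac_simps)
  show "AE x in M. x \<in> A \<longrightarrow> norm (h x * f x) \<le> norm (f x)"
    using bounded by (intro AE_I2 impI) (simp add: abs_mult mult_left_le_one_le)
qed

lemma set_integral_sum:
  fixes f :: "'i \<Rightarrow> 'a \<Rightarrow> 'b::{banach, second_countable_topology}"
  assumes "\<And>i. i \<in> I \<Longrightarrow> set_integrable M A (f i)"
  shows set_integrable_sum: "set_integrable M A (\<lambda>x. \<Sum>i\<in>I. f i x)"
    and "(LINT x:A|M. (\<Sum>i\<in>I. f i x)) = (\<Sum>i\<in>I. LINT x:A|M. f i x)"
  using assms unfolding set_integrable_def set_lebesgue_integral_def
  by (simp_all add: scaleR_sum_right)

lemma set_integrable_max:
  fixes f g :: "'a \<Rightarrow> real"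
  assumes "set_integrable M A f" "set_integrable M A g"
  shows "set_integrable M A (\<lambda>x. max (f x) (g x))"
proof -
  have "indicator A x * max (f x) (g x) = max (indicator A x * f x) (indicator A x * g x)"
    for x :: 'a
    by (simp add: indicator_def)
  then show ?thesis
    using assms unfolding set_integrable_def by simp
qed

lemma set_integrable_Max:
  fixes f :: "'i \<Rightarrow> 'a \<Rightarrow> real"
  assumes "finite I" "I \<noteq> {}" "\<And>i. i \<in> I \<Longrightarrow> set_integrable M A (f i)"
  shows "set_integrable M A (\<lambda>x. Max ((\<lambda>i. f i x) ` I))"
  using assms
proof (induction I rule: finite_ne_induct)
  case (singleton i)
  then show ?case by simp
next
  case (insert i I)
  then show ?case by (simp add: set_integrable_max)
qed

lemma Max_mult_right:
  fixes f :: "'i \<Rightarrow> real"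
  assumes "finite I" "I \<noteq> {}" "0 \<le> c"
  shows "Max ((\<lambda>i. f i * c) ` I) = Max (f ` I) * c"
proof -
  have "Max ((\<lambda>i. f i * c) ` I) = Max ((\<lambda>y. y * c) ` (f ` I))"
    by (simp add: image_image)
  also have "\<dots> = Max (f ` I) * c"
    using assms by (intro mono_Max_commute[symmetric]) (auto intro: monoI mult_right_mono)
  finally show ?thesis .
qed

lemma set_integrable_vmax_mult:
  fixes v :: "nat \<Rightarrow> real \<Rightarrow> real"
  assumes "n \<ge> 1" and g_nonneg: "\<And>x. x \<in> A \<Longrightarrow> 0 \<le> g x"
    and v_int: "\<And>i. i \<in> {1..n} \<Longrightarrow> set_integrable M A (\<lambda>x. v i x * g x)"
  shows "set_integrable M A (\<lambda>x. vmax n v x * g x)"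
proof -
  have N_nonempty: "{1..n} \<noteq> {}"
    using \<open>n \<ge> 1\<close> by simp
  have "set_integrable M A (\<lambda>x. Max ((\<lambda>i. v i x * g x) ` {1..n}))"
    using v_int N_nonempty by (intro set_integrable_Max) auto
  then show ?thesis
    using N_nonempty g_nonneg
    by (subst set_integrable_cong[OF refl refl]) (auto simp: vmax_def Max_mult_right)
qed

lemma subconvex_combination_le_Max:
  fixes w f :: "'i \<Rightarrow> real"
  assumes "finite I" "I \<noteq> {}"
    and w_nonneg: "\<And>i. i \<in> I \<Longrightarrow> 0 \<le> w i" and w_sum: "sum w I \<le> 1"
    and f_nonneg: "\<And>i. i \<in> I \<Longrightarrow> 0 \<le> f i"
  shows "(\<Sum>i\<in>I. w i * f i) \<le> Max (f ` I)"
proof -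
  have Max_nonneg: "0 \<le> Max (f ` I)"
    using assms f_nonneg by (meson Max_ge all_not_in_conv finite_imageI imageI order_trans)
  have "(\<Sum>i\<in>I. w i * f i) \<le> (\<Sum>i\<in>I. w i * Max (f ` I))"
    using assms by (intro sum_mono mult_left_mono) auto
  also have "\<dots> = sum w I * Max (f ` I)"
    by (simp add: sum_distrib_right)
  also have "\<dots> \<le> Max (f ` I)"
    using w_sum Max_nonneg w_nonneg by (simp add: mult_left_le_one_le sum_nonneg)
  finally show ?thesis .
qed

lemma obedience_imp_price_le_value:
  fixes w u g :: "'a \<Rightarrow> real"
  assumes "set_integrable M A (\<lambda>x. w x * g x)" "set_integrable M A (\<lambda>x. w x * u x * g x)"
    and obedient: "(LINT x:A|M. w x * (u x - p) * g x) \<ge> 0"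
  shows "p * (LINT x:A|M. w x * g x) \<le> (LINT x:A|M. w x * u x * g x)"
proof -
  have "(LINT x:A|M. w x * (u x - p) * g x) = (LINT x:A|M. w x * u x * g x - p * (w x * g x))"
    by (simp add: algebra_simps)
  also have "\<dots> = (LINT x:A|M. w x * u x * g x) - p * (LINT x:A|M. w x * g x)"
    using assms by simp
  finally show ?thesis
    using obedient by simp
qed

theorem mainTheorem10:
  fixes n :: nat and q1 q2 p :: real
    and g :: "real \<Rightarrow> real"
    and v :: "nat \<Rightarrow> real \<Rightarrow> real"
    and \<pi> :: "real \<Rightarrow> nat \<Rightarrow> real"
  assumes n_pos: "n \<ge> 1"
    and g_nonneg: "\<And>q. q \<in> {q1..q2} \<Longrightarrow> g q \<ge> 0"
    and g_int: "set_integrable lborel {q1..q2} g"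
    and g_density: "(LINT q:{q1..q2}|lborel. g q) = 1"
    and v_nonneg: "\<And>i q. i \<in> {1..n} \<Longrightarrow> q \<in> {q1..q2} \<Longrightarrow> v i q \<ge> 0"
    and v_int: "\<And>i. i \<in> {1..n} \<Longrightarrow> set_integrable lborel {q1..q2} (\<lambda>q. v i q * g q)"
    and \<pi>_meas: "\<And>i. i \<in> {0..n} \<Longrightarrow> (\<lambda>q. \<pi> q i) \<in> borel_measurable lborel"
    and \<pi>_nonneg: "\<And>i q. i \<in> {0..n} \<Longrightarrow> q \<in> {q1..q2} \<Longrightarrow> \<pi> q i \<ge> 0"
    and \<pi>_sum: "\<And>q. q \<in> {q1..q2} \<Longrightarrow> (\<Sum>i\<in>{1..n}. \<pi> q i) + \<pi> q 0 = 1"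
    and obed1: "\<And>i. i \<in> {1..n} \<Longrightarrow>
       (LINT q:{q1..q2}|lborel. \<pi> q i * (v i q - p) * g q) \<ge> 0"
    and obed2: "\<And>i. i \<in> {1..n} \<Longrightarrow>
       (LINT q:{q1..q2}|lborel. \<pi> q i * (v i q - p) * g q) \<ge> expect_q q1 q2 g (v i) - p"
  shows "Rev_sig n q1 q2 g \<pi> p \<le> expect_q q1 q2 g (vmax n v)"
proof -
  let ?Q = "{q1..q2}" and ?N = "{1..n}"
  have N_nonempty: "?N \<noteq> {}"
    using n_pos by simp
  have buyers_prob_le_1: "(\<Sum>i\<in>?N. \<pi> q i) \<le> 1" if "q \<in> ?Q" for q
    using \<pi>_sum[OF that] \<pi>_nonneg[of 0 q] that by simp
  have \<pi>_le_1: "\<bar>\<pi> q i\<bar> \<le> 1" if "i \<in> ?N" "q \<in> ?Q" for i q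
    using that buyers_prob_le_1[OF that(2)] \<pi>_nonneg member_le_sum[of i ?N "\<pi> q"] by force
  have buy_int: "set_integrable lborel ?Q (\<lambda>q. \<pi> q i * g q)" if "i \<in> ?N" for i
    using that \<pi>_meas \<pi>_le_1 by (intro set_integrable_bounded_factor[OF g_int]) auto
  have value_int: "set_integrable lborel ?Q (\<lambda>q. \<pi> q i * v i q * g q)" if "i \<in> ?N" for i
    unfolding mult.assoc
    using that \<pi>_meas \<pi>_le_1 by (intro set_integrable_bounded_factor[OF v_int]) auto
  have vmax_int: "set_integrable lborel ?Q (\<lambda>q. vmax n v q * g q)"
    using n_pos g_nonneg v_int by (rule set_integrable_vmax_mult)
  have "Rev_sig n q1 q2 g \<pi> p = (\<Sum>i\<in>?N. p * (LINT q:?Q|lborel. \<pi> q i * g q))"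
    using set_integral_sum(2)[of ?N lborel ?Q "\<lambda>i q. \<pi> q i * g q"] buy_int
    unfolding Rev_sig_def sum_distrib_right by (simp add: sum_distrib_left)
  also have "\<dots> \<le> (\<Sum>i\<in>?N. LINT q:?Q|lborel. \<pi> q i * v i q * g q)"
    by (intro sum_mono obedience_imp_price_le_value buy_int value_int obed1)
  also have "\<dots> = (LINT q:?Q|lborel. (\<Sum>i\<in>?N. \<pi> q i * v i q * g q))"
    using set_integral_sum(2)[of ?N lborel ?Q "\<lambda>i q. \<pi> q i * v i q * g q"] value_int
    by simp
  also have "\<dots> \<le> (LINT q:?Q|lborel. vmax n v q * g q)"
  proof (intro set_integral_mono set_integrable_sum value_int vmax_int)
    fix q assume q: "q \<in> ?Q"
    have "(\<Sum>i\<in>?N. \<pi> q i * v i q) \<le> vmax n v q"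
      unfolding vmax_def using q N_nonempty \<pi>_nonneg v_nonneg buyers_prob_le_1
      by (intro subconvex_combination_le_Max) auto
    then show "(\<Sum>i\<in>?N. \<pi> q i * v i q * g q) \<le> vmax n v q * g q"
      using g_nonneg[OF q] by (simp add: sum_distrib_right[symmetric] mult_right_mono)
  qed
  also have "\<dots> = expect_q q1 q2 g (vmax n v)"
    by (simp add: expect_q_def)
  finally show ?thesis .
qed

end
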